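(* Let $\mu_1,\dots,\mu_k$ be probability measures on $\mathbb{R}$ such that, for each $j$, $\lim_{t\to0}H((\mu_j)_t)/|\log t|$ exists. Let $\alpha_j\ge0$ with $\sum_j\alpha_j=1$. Then $$\delta_c\Big(\sum_j\alpha_j\mu_j\Big)=\sum_j\alpha_j\delta_c(\mu_j).$$
   Context: For $t>0$, $\nu_t$ is the centered Gaussian law on $\mathbb{R}$ with variance $t^2$, $\rho_t=\rho*\nu_t$ for a probability measure $\rho$, and $H(p\,dx)=\int p\log p\,dx$. Define $$\delta_c(\rho)=1-\liminf_{t\to0}\frac{H(\rho_t)}{|\log t|}.$$ *)

theory Defs
  imports "HOL-Probability.Probability"
begin

text \<open>Density of rho_t = rho * nu_t, nu_t = centered Gaussian with variance t^2.\<close>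
definition smoothed_density :: "real measure \<Rightarrow> real \<Rightarrow> real \<Rightarrow> real" where
  "smoothed_density \<rho> t x = (\<integral>y. normal_density 0 t (x - y) \<partial>\<rho>)"

definition entropyH :: "(real \<Rightarrow> real) \<Rightarrow> ereal" where
  "entropyH p =
     enn2ereal (\<integral>\<^sup>+ x. ennreal (max 0 (p x * ln (p x))) \<partial>lborel)
   - enn2ereal (\<integral>\<^sup>+ x. ennreal (max 0 (- (p x * ln (p x)))) \<partial>lborel)"

definition entropy_ratio :: "real measure \<Rightarrow> real \<Rightarrow> ereal" where
  "entropy_ratio \<rho> t = entropyH (smoothed_density \<rho> t) * ereal (1 / \<bar>ln t\<bar>)"

definition delta_c :: "real measure \<Rightarrow> ereal" where
  "delta_c \<rho> = 1 - Liminf (at_right 0) (entropy_ratio \<rho>)"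

definition mixture :: "nat \<Rightarrow> (nat \<Rightarrow> real) \<Rightarrow> (nat \<Rightarrow> real measure) \<Rightarrow> real measure" where
  "mixture k \<alpha> \<mu> = measure_of UNIV (sets borel)
      (\<lambda>A. \<Sum>j<k. ennreal (\<alpha> j) * emeasure (\<mu> j) A)"

end

theory Submission
  imports Defs "HOL-Real_Asymp.Real_Asymp"
begin

text \<open>
  For \<open>\<phi>(y) = y ln y\<close> and weights \<open>\<alpha>\<^sub>j\<close>, convexity of \<open>\<phi>\<close> and monotonicity of \<open>ln\<close> give
  pointwise \<open>\<Sum>\<^sub>j \<phi>(\<alpha>\<^sub>j q\<^sub>j) \<le> \<phi>(\<Sum>\<^sub>j \<alpha>\<^sub>j q\<^sub>j) \<le> \<Sum>\<^sub>j \<alpha>\<^sub>j \<phi>(q\<^sub>j)\<close>. Smoothing commutes with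
  mixing, so applying this to the smoothed densities \<open>q\<^sub>j\<close> of the \<open>\<mu>\<^sub>j\<close> (each of mass 1) and
  integrating traps \<open>H((\<Sum>\<^sub>j \<alpha>\<^sub>j \<mu>\<^sub>j)\<^sub>t)\<close> between \<open>\<Sum>\<^sub>j \<alpha>\<^sub>j H((\<mu>\<^sub>j)\<^sub>t) + \<Sum>\<^sub>j \<alpha>\<^sub>j ln \<alpha>\<^sub>j\<close> and
  \<open>\<Sum>\<^sub>j \<alpha>\<^sub>j H((\<mu>\<^sub>j)\<^sub>t)\<close>. After division by \<open>|log t|\<close> the constant gap vanishes, so the
  mixture's ratio converges to the weighted sum of the components' limits, and the \<open>liminf\<close>
  defining \<open>\<delta>\<^sub>c\<close> is an actual limit for the mixture and for every component.
\<close>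

lemma diff_le_mult_ln_diff:
  fixes q P :: real
  assumes "0 \<le> q" "0 < P"
  shows "q - P \<le> q * ln q - q * ln P"
proof (cases "q = 0")
  case False
  with assms have "ln (P / q) \<le> P / q - 1"
    by (intro ln_le_minus_one) auto
  with False assms have "q * ln (P / q) \<le> P - q"
    by (simp add: field_simps mult_left_mono)
  with False assms show ?thesis
    by (simp add: ln_div algebra_simps)
qed (use assms in simp)

lemma convex_comb_mult_ln_le:
  fixes a q :: "'i \<Rightarrow> real"
  assumes "finite A" "\<And>j. j \<in> A \<Longrightarrow> 0 \<le> a j" "\<And>j. j \<in> A \<Longrightarrow> 0 \<le> q j" "(\<Sum>j\<in>A. a j) = 1"
  shows "(\<Sum>j\<in>A. a j * q j) * ln (\<Sum>j\<in>A. a j * q j) \<le> (\<Sum>j\<in>A. a j * (q j * ln (q j)))"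
proof -
  define P where "P = (\<Sum>j\<in>A. a j * q j)"
  show ?thesis
  proof (cases "P = 0")
    case True
    then have "\<forall>j\<in>A. a j * q j = 0"
      using assms unfolding P_def by (simp add: sum_nonneg_eq_0_iff)
    then show ?thesis
      using True unfolding P_def by (simp add: sum.neutral mult.assoc[symmetric])
  next
    case False
    then have "P > 0"
      unfolding P_def using assms by (simp add: order_neq_le_trans sum_nonneg)
    then have "(\<Sum>j\<in>A. a j * (q j - P)) \<le> (\<Sum>j\<in>A. a j * (q j * ln (q j) - q j * ln P))"
      using assms by (intro sum_mono mult_left_mono diff_le_mult_ln_diff) auto
    also have "(\<Sum>j\<in>A. a j * (q j - P)) = 0"
      using assms(4) by (simp add: P_def right_diff_distrib sum_subtractf sum_distrib_right[symmetric])
    also have "(\<Sum>j\<in>A. a j * (q j * ln (q j) - q j * ln P)) = (\<Sum>j\<in>A. a j * (q j * ln (q j))) - P * ln P"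
      by (simp add: P_def right_diff_distrib sum_subtractf sum_distrib_right mult.assoc)
    finally show ?thesis
      unfolding P_def by simp
  qed
qed

lemma sum_mult_ln_le:
  fixes x :: "'i \<Rightarrow> real"
  assumes "finite A" "\<And>j. j \<in> A \<Longrightarrow> 0 \<le> x j"
  shows "(\<Sum>j\<in>A. x j * ln (x j)) \<le> (\<Sum>j\<in>A. x j) * ln (\<Sum>j\<in>A. x j)"
proof -
  have "x j * ln (x j) \<le> x j * ln (\<Sum>i\<in>A. x i)" if "j \<in> A" for j
  proof (cases "x j = 0")
    case False
    with assms that have "0 < x j" "x j \<le> (\<Sum>i\<in>A. x i)"
      by (auto intro: member_le_sum order.not_eq_order_implies_strict)
    then show ?thesis
      by (intro mult_left_mono) auto
  qed simp
  then show ?thesis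
    by (simp add: sum_distrib_right sum_mono)
qed

lemma mult_ln_mult:
  fixes a q :: real
  assumes "0 \<le> a" "0 \<le> q"
  shows "a * q * ln (a * q) = a * ln a * q + a * (q * ln q)"
  using assms by (cases "a = 0 \<or> q = 0") (auto simp: ln_mult algebra_simps)

lemma entropyH_eq_nn_integrals:
  "entropyH f = enn2ereal (\<integral>\<^sup>+ x. ennreal (f x * ln (f x)) \<partial>lborel)
     - enn2ereal (\<integral>\<^sup>+ x. ennreal (- (f x * ln (f x))) \<partial>lborel)"
proof -
  have "ennreal (max 0 y) = ennreal y" for y :: real
    by (cases "y \<ge> 0") (auto simp: ennreal_neg)
  then show ?thesis
    unfolding entropyH_def by presburger
qed

lemma entropyH_finite_iff:
  assumes "f \<in> borel_measurable lborel"
  shows "\<bar>entropyH f\<bar> \<noteq> \<infinity> \<longleftrightarrow> integrable lborel (\<lambda>x. f x * ln (f x))"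
  using assms
  by (cases "(\<integral>\<^sup>+ x. ennreal (f x * ln (f x)) \<partial>lborel)"; cases "(\<integral>\<^sup>+ x. ennreal (- (f x * ln (f x))) \<partial>lborel)")
     (auto simp: entropyH_eq_nn_integrals real_integrable_def)

lemma entropyH_eq_integral:
  assumes "integrable lborel (\<lambda>x. f x * ln (f x))"
  shows "entropyH f = ereal (\<integral>x. f x * ln (f x) \<partial>lborel)"
  using assms
  by (cases "(\<integral>\<^sup>+ x. ennreal (f x * ln (f x)) \<partial>lborel)"; cases "(\<integral>\<^sup>+ x. ennreal (- (f x * ln (f x))) \<partial>lborel)")
     (auto simp: entropyH_eq_nn_integrals real_lebesgue_integral_def real_integrable_def)

lemma integral_mult_ln_convex_combination:
  fixes p :: "'i \<Rightarrow> real \<Rightarrow> real" and \<alpha> :: "'i \<Rightarrow> real"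
  assumes "finite A"
    and meas: "\<And>j. j \<in> A \<Longrightarrow> p j \<in> borel_measurable borel"
    and nonneg: "\<And>j x. j \<in> A \<Longrightarrow> 0 \<le> p j x"
    and mass: "\<And>j. j \<in> A \<Longrightarrow> (\<integral>\<^sup>+ x. p j x \<partial>lborel) = 1"
    and int: "\<And>j. j \<in> A \<Longrightarrow> integrable lborel (\<lambda>x. p j x * ln (p j x))"
    and \<alpha>: "\<And>j. j \<in> A \<Longrightarrow> 0 \<le> \<alpha> j" "(\<Sum>j\<in>A. \<alpha> j) = 1"
  defines "m \<equiv> \<lambda>x. \<Sum>j\<in>A. \<alpha> j * p j x"
  shows "integrable lborel (\<lambda>x. m x * ln (m x))"
    and "(\<Sum>j\<in>A. \<alpha> j * ln (\<alpha> j)) + (\<Sum>j\<in>A. \<alpha> j * (\<integral>x. p j x * ln (p j x) \<partial>lborel))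
           \<le> (\<integral>x. m x * ln (m x) \<partial>lborel)"
    and "(\<integral>x. m x * ln (m x) \<partial>lborel) \<le> (\<Sum>j\<in>A. \<alpha> j * (\<integral>x. p j x * ln (p j x) \<partial>lborel))"
proof -
  have p_int: "integrable lborel (p j)" and p_integral: "(\<integral>x. p j x \<partial>lborel) = 1" if "j \<in> A" for j
    using mass[OF that] nonneg[OF that] meas[OF that]
    by (auto intro!: integrableI_nonneg simp: integral_eq_nn_integral)
  define upper where "upper x = (\<Sum>j\<in>A. \<alpha> j * (p j x * ln (p j x)))" for x
  define lower where "lower x = (\<Sum>j\<in>A. \<alpha> j * ln (\<alpha> j) * p j x + \<alpha> j * (p j x * ln (p j x)))" for x
  have upper_int: "integrable lborel upper"
    unfolding upper_def using int by auto
  have lower_int: "integrable lborel lower"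
    unfolding lower_def using int p_int by auto
  have below_upper: "m x * ln (m x) \<le> upper x" for x
    unfolding m_def upper_def using \<open>finite A\<close> \<alpha> nonneg by (intro convex_comb_mult_ln_le) auto
  have above_lower: "lower x \<le> m x * ln (m x)" for x
  proof -
    have "lower x = (\<Sum>j\<in>A. \<alpha> j * p j x * ln (\<alpha> j * p j x))"
      unfolding lower_def using \<alpha> nonneg by (intro sum.cong refl mult_ln_mult[symmetric]) auto
    also have "\<dots> \<le> m x * ln (m x)"
      unfolding m_def using \<alpha> nonneg \<open>finite A\<close> by (intro sum_mult_ln_le) auto
    finally show ?thesis .
  qed
  show m_int: "integrable lborel (\<lambda>x. m x * ln (m x))"
  proof (rule Bochner_Integration.integrable_bound)
    show "integrable lborel (\<lambda>x. \<bar>upper x\<bar> + \<bar>lower x\<bar>)"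
      using upper_int lower_int by simp
    show "(\<lambda>x. m x * ln (m x)) \<in> borel_measurable lborel"
      unfolding m_def using meas by measurable
    show "AE x in lborel. norm (m x * ln (m x)) \<le> norm (\<bar>upper x\<bar> + \<bar>lower x\<bar>)"
      using below_upper above_lower by (intro AE_I2) (smt (verit) real_norm_def)
  qed
  have "(\<integral>x. lower x \<partial>lborel) \<le> (\<integral>x. m x * ln (m x) \<partial>lborel)"
    using lower_int m_int above_lower by (intro integral_mono)
  moreover have "(\<integral>x. lower x \<partial>lborel)
      = (\<Sum>j\<in>A. \<alpha> j * ln (\<alpha> j)) + (\<Sum>j\<in>A. \<alpha> j * (\<integral>x. p j x * ln (p j x) \<partial>lborel))"
    unfolding lower_def using int p_int p_integral by (simp add: sum.distrib)
  ultimately show "(\<Sum>j\<in>A. \<alpha> j * ln (\<alpha> j)) + (\<Sum>j\<in>A. \<alpha> j * (\<integral>x. p j x * ln (p j x) \<partial>lborel))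
           \<le> (\<integral>x. m x * ln (m x) \<partial>lborel)"
    by simp
  have "(\<integral>x. m x * ln (m x) \<partial>lborel) \<le> (\<integral>x. upper x \<partial>lborel)"
    using upper_int m_int below_upper by (intro integral_mono)
  also have "(\<integral>x. upper x \<partial>lborel) = (\<Sum>j\<in>A. \<alpha> j * (\<integral>x. p j x * ln (p j x) \<partial>lborel))"
    unfolding upper_def using int by simp
  finally show "(\<integral>x. m x * ln (m x) \<partial>lborel) \<le> (\<Sum>j\<in>A. \<alpha> j * (\<integral>x. p j x * ln (p j x) \<partial>lborel))" .
qed

lemma sets_mixture [simp, measurable_cong]: "sets (mixture k \<alpha> \<mu>) = sets borel"
  unfolding mixture_def using sets.sigma_sets_eq[of borel] by simp

lemma emeasure_mixture:
  assumes "\<And>j. j < k \<Longrightarrow> sets (\<mu> j) = sets borel" and "A \<in> sets borel"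
  shows "emeasure (mixture k \<alpha> \<mu>) A = (\<Sum>j<k. ennreal (\<alpha> j) * emeasure (\<mu> j) A)"
  unfolding mixture_def
proof (rule emeasure_measure_of_sigma)
  show "countably_additive (sets borel) (\<lambda>A. \<Sum>j<k. ennreal (\<alpha> j) * emeasure (\<mu> j) A)"
  proof (rule countably_additiveI)
    fix B :: "nat \<Rightarrow> real set"
    assume "range B \<subseteq> sets borel" "disjoint_family B"
    with assms(1) have "(\<Sum>i. emeasure (\<mu> j) (B i)) = emeasure (\<mu> j) (\<Union>i. B i)" if "j < k" for j
      using that by (intro suminf_emeasure) auto
    then show "(\<Sum>i. \<Sum>j<k. ennreal (\<alpha> j) * emeasure (\<mu> j) (B i))
        = (\<Sum>j<k. ennreal (\<alpha> j) * emeasure (\<mu> j) (\<Union>i. B i))"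
      by (simp add: suminf_sum[OF summableI] ennreal_suminf_cmult)
  qed
qed (use assms(2) sets.sigma_algebra_axioms[of borel] in \<open>auto simp: positive_def\<close>)

lemma nn_integral_mixture:
  assumes sets_\<mu>: "\<And>j. j < k \<Longrightarrow> sets (\<mu> j) = sets borel" and "f \<in> borel_measurable borel"
  shows "(\<integral>\<^sup>+ x. f x \<partial>mixture k \<alpha> \<mu>) = (\<Sum>j<k. ennreal (\<alpha> j) * (\<integral>\<^sup>+ x. f x \<partial>\<mu> j))"
proof -
  have measurable_\<mu>: "u \<in> borel_measurable (\<mu> j)" if "u \<in> borel_measurable borel" "j < k" for u j
    using that(1) unfolding measurable_cong_sets[OF sets_\<mu>[OF that(2)] refl] .
  from assms(2) show ?thesis
  proof induct
    case (cong f g)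
    then show ?case
      by (simp cong: nn_integral_cong)
  next
    case (set A)
    then show ?case
      using sets_\<mu> by (simp add: emeasure_mixture)
  next
    case (mult u c)
    then show ?case
      by (simp add: measurable_\<mu> nn_integral_cmult sum_distrib_left ac_simps)
  next
    case (add u v)
    then show ?case
      by (simp add: measurable_\<mu> nn_integral_add sum.distrib distrib_left)
  next
    case (seq U)
    have "(\<integral>\<^sup>+ x. (SUP i. U i) x \<partial>mixture k \<alpha> \<mu>) = (SUP i. \<integral>\<^sup>+ x. U i x \<partial>mixture k \<alpha> \<mu>)"
      unfolding SUP_apply using seq by (intro nn_integral_monotone_convergence_SUP) auto
    moreover have "(\<integral>\<^sup>+ x. (SUP i. U i) x \<partial>\<mu> j) = (SUP i. \<integral>\<^sup>+ x. U i x \<partial>\<mu> j)" if "j < k" for j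
      unfolding SUP_apply using seq that by (intro nn_integral_monotone_convergence_SUP) (auto simp: measurable_\<mu>)
    moreover have "(SUP i. \<Sum>j<k. ennreal (\<alpha> j) * integral\<^sup>N (\<mu> j) (U i))
        = (\<Sum>j<k. SUP i. ennreal (\<alpha> j) * integral\<^sup>N (\<mu> j) (U i))"
      using seq by (intro ennreal_SUP_sum)
        (auto intro!: mult_left_mono nn_integral_mono simp: incseq_def le_fun_def)
    ultimately show ?case
      using seq by (simp add: SUP_mult_left_ennreal)
  qed
qed

lemma smoothed_density_nonneg: "0 \<le> smoothed_density M t x"
  unfolding smoothed_density_def by (intro integral_nonneg_AE) auto

lemma smoothed_density_eq_nn_integral:
  assumes "finite_measure M" "sets M = sets borel"
  shows "ennreal (smoothed_density M t x) = (\<integral>\<^sup>+ y. normal_density 0 t (x - y) \<partial>M)"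
proof -
  interpret finite_measure M by fact
  have "normal_density 0 t (x - y) \<le> 1 / sqrt (2 * pi * t\<^sup>2)" for y
    unfolding normal_density_def by (intro mult_left_le) auto
  moreover have "(\<lambda>y. normal_density 0 t (x - y)) \<in> borel_measurable M"
    using assms(2) by measurable
  ultimately have "integrable M (\<lambda>y. normal_density 0 t (x - y))"
    by (intro integrable_const_bound[where B = "1 / sqrt (2 * pi * t\<^sup>2)"]) auto
  then show ?thesis
    unfolding smoothed_density_def by (intro nn_integral_eq_integral[symmetric]) auto
qed

lemma borel_measurable_normal_kernel:
  assumes "sets M = sets borel" "sets N = sets borel"
  shows "(\<lambda>(x, y). ennreal (normal_density 0 t (x - y))) \<in> borel_measurable (M \<Otimes>\<^sub>M N)"
proof -
  have sets_eq: "sets (M \<Otimes>\<^sub>M N) = sets (borel \<Otimes>\<^sub>M borel)"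
    using assms by (intro sets_pair_measure_cong)
  show ?thesis
    by (subst measurable_cong_sets[OF sets_eq refl]) measurable
qed

lemma borel_measurable_smoothed_density:
  assumes "finite_measure M" "sets M = sets borel"
  shows "smoothed_density M t \<in> borel_measurable borel"
proof -
  interpret finite_measure M by fact
  have "smoothed_density M t = (\<lambda>x. enn2real (\<integral>\<^sup>+ y. normal_density 0 t (x - y) \<partial>M))"
    using smoothed_density_eq_nn_integral[OF assms] smoothed_density_nonneg
    by (metis enn2real_ennreal)
  also have "\<dots> \<in> borel_measurable borel"
    using borel_measurable_normal_kernel[OF refl assms(2)] by measurable
  finally show ?thesis .
qed

lemma nn_integral_smoothed_density:
  assumes "prob_space M" "sets M = sets borel" "0 < t"
  shows "(\<integral>\<^sup>+ x. smoothed_density M t x \<partial>lborel) = 1"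
proof -
  interpret prob_space M by fact
  interpret pair_sigma_finite lborel M ..
  have kernel: "(\<lambda>(x, y). ennreal (normal_density 0 t (x - y))) \<in> borel_measurable (lborel \<Otimes>\<^sub>M M)"
    using assms(2) by (intro borel_measurable_normal_kernel) auto
  have "(\<integral>\<^sup>+ x. normal_density 0 t (x - y) \<partial>lborel) = 1" for y
  proof -
    have "(\<integral>\<^sup>+ x. normal_density 0 t (x - y) \<partial>lborel) = (\<integral>\<^sup>+ x. normal_density y t x \<partial>lborel)"
      unfolding normal_density_def by (simp add: power2_commute)
    also have "\<dots> = 1"
      using assms(3) by (subst nn_integral_eq_integral) auto
    finally show ?thesis .
  qed
  then have "(\<integral>\<^sup>+ y. \<integral>\<^sup>+ x. normal_density 0 t (x - y) \<partial>lborel \<partial>M) = 1"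
    by (simp add: emeasure_space_1)
  then show ?thesis
    using smoothed_density_eq_nn_integral[OF finite_measure_axioms assms(2)]
      Fubini[OF kernel]
    by simp
qed

lemma smoothed_density_mixture:
  assumes "\<And>j. j < k \<Longrightarrow> prob_space (\<mu> j)" "\<And>j. j < k \<Longrightarrow> sets (\<mu> j) = sets borel"
    and "\<And>j. j < k \<Longrightarrow> 0 \<le> \<alpha> j"
  shows "smoothed_density (mixture k \<alpha> \<mu>) t x = (\<Sum>j<k. \<alpha> j * smoothed_density (\<mu> j) t x)"
proof -
  have "smoothed_density (mixture k \<alpha> \<mu>) t x
      = enn2real (\<integral>\<^sup>+ y. normal_density 0 t (x - y) \<partial>mixture k \<alpha> \<mu>)"
    unfolding smoothed_density_def by (rule integral_eq_nn_integral) auto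
  also have "(\<integral>\<^sup>+ y. normal_density 0 t (x - y) \<partial>mixture k \<alpha> \<mu>)
      = (\<Sum>j<k. ennreal (\<alpha> j) * ennreal (smoothed_density (\<mu> j) t x))"
    using assms by (simp add: nn_integral_mixture smoothed_density_eq_nn_integral prob_space_def)
  also have "\<dots> = ennreal (\<Sum>j<k. \<alpha> j * smoothed_density (\<mu> j) t x)"
    using assms(3) smoothed_density_nonneg
    by (subst sum_ennreal[symmetric]) (auto simp: ennreal_mult intro!: sum.cong)
  moreover have "0 \<le> (\<Sum>j<k. \<alpha> j * smoothed_density (\<mu> j) t x)"
    by (intro sum_nonneg) (simp add: assms(3) smoothed_density_nonneg)
  ultimately show ?thesis
    by simp
qed

text \<open>The real-valued \<open>H(\<rho>\<^sub>t)\<close>; as a Bochner integral it is \<open>0\<close>, not \<open>entropyH\<close>, when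
  \<open>y ln y\<close> fails to be integrable.\<close>

definition smoothed_entropy :: "real measure \<Rightarrow> real \<Rightarrow> real" where
  "smoothed_entropy \<rho> t = (\<integral>x. smoothed_density \<rho> t x * ln (smoothed_density \<rho> t x) \<partial>lborel)"

lemma entropy_ratio_eq_smoothed_entropy:
  assumes "integrable lborel (\<lambda>x. smoothed_density \<rho> t x * ln (smoothed_density \<rho> t x))"
  shows "entropy_ratio \<rho> t = ereal (smoothed_entropy \<rho> t / \<bar>ln t\<bar>)"
  using entropyH_eq_integral[OF assms]
  by (simp add: entropy_ratio_def smoothed_entropy_def)

lemma tendsto_smoothed_entropy_ratio:
  assumes "prob_space \<rho>" "sets \<rho> = sets borel" and lim: "(entropy_ratio \<rho> \<longlongrightarrow> ereal L) (at_right 0)"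
  shows "eventually (\<lambda>t. integrable lborel (\<lambda>x. smoothed_density \<rho> t x * ln (smoothed_density \<rho> t x)))
           (at_right 0)" (is "eventually ?int _")
    and "((\<lambda>t. smoothed_entropy \<rho> t / \<bar>ln t\<bar>) \<longlongrightarrow> L) (at_right 0)"
proof -
  have "eventually (\<lambda>t. t \<in> {0<..<1}) (at_right (0::real))"
    by (rule eventually_at_right_real) simp
  moreover have "eventually (\<lambda>t. entropy_ratio \<rho> t \<noteq> \<infinity>) (at_right 0)"
    and "eventually (\<lambda>t. entropy_ratio \<rho> t \<noteq> -\<infinity>) (at_right 0)"
    using lim by (auto intro: tendsto_imp_eventually_ne)
  ultimately show "eventually ?int (at_right 0)"
  proof eventually_elim
    case (elim t)
    \<comment> \<open>the factor \<open>1 / \<bar>ln t\<bar>\<close> is positive, so a finite ratio forces a finite entropy\<close>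
    then have "\<bar>entropyH (smoothed_density \<rho> t)\<bar> \<noteq> \<infinity>"
      by (auto simp: entropy_ratio_def)
    then show ?case
      using borel_measurable_smoothed_density assms(1,2) by (simp add: entropyH_finite_iff prob_space_def)
  qed
  then have "eventually (\<lambda>t. entropy_ratio \<rho> t = ereal (smoothed_entropy \<rho> t / \<bar>ln t\<bar>)) (at_right 0)"
    by eventually_elim (rule entropy_ratio_eq_smoothed_entropy)
  with lim have "((\<lambda>t. ereal (smoothed_entropy \<rho> t / \<bar>ln t\<bar>)) \<longlongrightarrow> ereal L) (at_right 0)"
    by (rule Lim_transform_eventually)
  then show "((\<lambda>t. smoothed_entropy \<rho> t / \<bar>ln t\<bar>) \<longlongrightarrow> L) (at_right 0)"
    by simp
qed

lemma tendsto_const_div_abs_ln: "((\<lambda>t::real. c / \<bar>ln t\<bar>) \<longlongrightarrow> 0) (at_right 0)"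
  by real_asymp

lemma tendsto_div_abs_ln_squeeze:
  fixes f G :: "real \<Rightarrow> real"
  assumes bounds: "eventually (\<lambda>t. c + G t \<le> f t \<and> f t \<le> G t) (at_right 0)"
    and lim: "((\<lambda>t. G t / \<bar>ln t\<bar>) \<longlongrightarrow> L) (at_right 0)"
  shows "((\<lambda>t. f t / \<bar>ln t\<bar>) \<longlongrightarrow> L) (at_right 0)"
proof (rule tendsto_sandwich[where f = "\<lambda>t. G t / \<bar>ln t\<bar> + c / \<bar>ln t\<bar>"])
  from bounds have "eventually (\<lambda>t. (c + G t) / \<bar>ln t\<bar> \<le> f t / \<bar>ln t\<bar> \<and> f t / \<bar>ln t\<bar> \<le> G t / \<bar>ln t\<bar>)
      (at_right 0)"
    by (rule eventually_mono) (intro conjI divide_right_mono; simp)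
  then show "eventually (\<lambda>t. G t / \<bar>ln t\<bar> + c / \<bar>ln t\<bar> \<le> f t / \<bar>ln t\<bar>) (at_right 0)"
    and "eventually (\<lambda>t. f t / \<bar>ln t\<bar> \<le> G t / \<bar>ln t\<bar>) (at_right 0)"
    by (auto elim!: eventually_mono simp: add_divide_distrib)
  show "((\<lambda>t. G t / \<bar>ln t\<bar> + c / \<bar>ln t\<bar>) \<longlongrightarrow> L) (at_right 0)"
    using tendsto_add[OF lim tendsto_const_div_abs_ln] by simp
qed (rule lim)

lemma smoothed_entropy_mixture_bounds:
  assumes prob: "\<And>j. j < k \<Longrightarrow> prob_space (\<mu> j)" and sets: "\<And>j. j < k \<Longrightarrow> sets (\<mu> j) = sets borel"
    and \<alpha>: "\<And>j. j < k \<Longrightarrow> 0 \<le> \<alpha> j" "(\<Sum>j<k. \<alpha> j) = 1" and "0 < t"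
    and int: "\<And>j. j < k \<Longrightarrow>
      integrable lborel (\<lambda>x. smoothed_density (\<mu> j) t x * ln (smoothed_density (\<mu> j) t x))"
  defines "\<rho> \<equiv> mixture k \<alpha> \<mu>"
  shows "integrable lborel (\<lambda>x. smoothed_density \<rho> t x * ln (smoothed_density \<rho> t x))"
    and "(\<Sum>j<k. \<alpha> j * ln (\<alpha> j)) + (\<Sum>j<k. \<alpha> j * smoothed_entropy (\<mu> j) t) \<le> smoothed_entropy \<rho> t"
    and "smoothed_entropy \<rho> t \<le> (\<Sum>j<k. \<alpha> j * smoothed_entropy (\<mu> j) t)"
proof -
  have "smoothed_density \<rho> t = (\<lambda>x. \<Sum>j<k. \<alpha> j * smoothed_density (\<mu> j) t x)"
    unfolding \<rho>_def using prob sets \<alpha>(1) by (intro ext smoothed_density_mixture)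
  moreover note integral_mult_ln_convex_combination[of "{..<k}" "\<lambda>j. smoothed_density (\<mu> j) t" \<alpha>]
  ultimately show "integrable lborel (\<lambda>x. smoothed_density \<rho> t x * ln (smoothed_density \<rho> t x))"
    and "(\<Sum>j<k. \<alpha> j * ln (\<alpha> j)) + (\<Sum>j<k. \<alpha> j * smoothed_entropy (\<mu> j) t) \<le> smoothed_entropy \<rho> t"
    and "smoothed_entropy \<rho> t \<le> (\<Sum>j<k. \<alpha> j * smoothed_entropy (\<mu> j) t)"
    using prob sets \<alpha> int \<open>0 < t\<close>
    by (simp_all add: smoothed_entropy_def smoothed_density_nonneg nn_integral_smoothed_density
        borel_measurable_smoothed_density prob_space_def)
qed

lemma tendsto_entropy_ratio_mixture:
  assumes prob: "\<And>j. j < k \<Longrightarrow> prob_space (\<mu> j)" and sets: "\<And>j. j < k \<Longrightarrow> sets (\<mu> j) = sets borel"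
    and \<alpha>: "\<And>j. j < k \<Longrightarrow> 0 \<le> \<alpha> j" "(\<Sum>j<k. \<alpha> j) = 1"
    and lim: "\<And>j. j < k \<Longrightarrow> (entropy_ratio (\<mu> j) \<longlongrightarrow> ereal (L j)) (at_right 0)"
  defines "\<rho> \<equiv> mixture k \<alpha> \<mu>"
  shows "(entropy_ratio \<rho> \<longlongrightarrow> ereal (\<Sum>j<k. \<alpha> j * L j)) (at_right 0)"
proof -
  define G where "G t = (\<Sum>j<k. \<alpha> j * smoothed_entropy (\<mu> j) t)" for t
  have "eventually (\<lambda>t. 0 < t) (at_right (0::real))"
    by (rule eventually_at_right_less)
  moreover have "eventually (\<lambda>t. \<forall>j\<in>{..<k}. integrable lborel
      (\<lambda>x. smoothed_density (\<mu> j) t x * ln (smoothed_density (\<mu> j) t x))) (at_right 0)"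
    using tendsto_smoothed_entropy_ratio(1)[OF prob sets lim] by (intro eventually_ball_finite) auto
  ultimately have ev: "eventually (\<lambda>t.
      integrable lborel (\<lambda>x. smoothed_density \<rho> t x * ln (smoothed_density \<rho> t x))
      \<and> (\<Sum>j<k. \<alpha> j * ln (\<alpha> j)) + G t \<le> smoothed_entropy \<rho> t \<and> smoothed_entropy \<rho> t \<le> G t) (at_right 0)"
  proof eventually_elim
    case (elim t)
    then show ?case
      using smoothed_entropy_mixture_bounds[of k \<mu> \<alpha> t, OF prob sets \<alpha>, folded \<rho>_def G_def] by blast
  qed
  have G_lim: "((\<lambda>t. G t / \<bar>ln t\<bar>) \<longlongrightarrow> (\<Sum>j<k. \<alpha> j * L j)) (at_right 0)"
    unfolding G_def sum_divide_distrib times_divide_eq_right[symmetric]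
    using tendsto_smoothed_entropy_ratio(2)[OF prob sets lim] by (intro tendsto_sum tendsto_mult_left) auto
  from ev have bounds: "eventually (\<lambda>t. (\<Sum>j<k. \<alpha> j * ln (\<alpha> j)) + G t \<le> smoothed_entropy \<rho> t
      \<and> smoothed_entropy \<rho> t \<le> G t) (at_right 0)"
    by (rule eventually_mono) blast
  have "((\<lambda>t. smoothed_entropy \<rho> t / \<bar>ln t\<bar>) \<longlongrightarrow> (\<Sum>j<k. \<alpha> j * L j)) (at_right 0)"
    by (rule tendsto_div_abs_ln_squeeze[OF bounds G_lim])
  then have "((\<lambda>t. ereal (smoothed_entropy \<rho> t / \<bar>ln t\<bar>)) \<longlongrightarrow> ereal (\<Sum>j<k. \<alpha> j * L j)) (at_right 0)"
    by simp
  moreover have "eventually (\<lambda>t. ereal (smoothed_entropy \<rho> t / \<bar>ln t\<bar>) = entropy_ratio \<rho> t) (at_right 0)"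
    using ev by (rule eventually_mono) (simp add: entropy_ratio_eq_smoothed_entropy)
  ultimately show ?thesis
    by (rule Lim_transform_eventually)
qed

lemma delta_c_eq_of_tendsto:
  assumes "(entropy_ratio \<rho> \<longlongrightarrow> ereal L) (at_right 0)"
  shows "delta_c \<rho> = ereal (1 - L)"
  using assms unfolding delta_c_def by (simp add: lim_imp_Liminf one_ereal_def)

theorem corollary2p3:
  fixes k :: nat and \<mu> :: "nat \<Rightarrow> real measure" and \<alpha> :: "nat \<Rightarrow> real"
  assumes "\<And>j. j < k \<Longrightarrow> prob_space (\<mu> j)"
    and "\<And>j. j < k \<Longrightarrow> sets (\<mu> j) = sets borel"
    and "\<And>j. j < k \<Longrightarrow> \<exists>L::real. (entropy_ratio (\<mu> j) \<longlongrightarrow> ereal L) (at_right 0)"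
    and "\<And>j. j < k \<Longrightarrow> \<alpha> j \<ge> 0"
    and "(\<Sum>j<k. \<alpha> j) = 1"
  shows "delta_c (mixture k \<alpha> \<mu>) = (\<Sum>j<k. ereal (\<alpha> j) * delta_c (\<mu> j))"
proof -
  obtain L where L: "\<And>j. j < k \<Longrightarrow> (entropy_ratio (\<mu> j) \<longlongrightarrow> ereal (L j)) (at_right 0)"
    using assms(3) by metis
  have "delta_c (mixture k \<alpha> \<mu>) = ereal (1 - (\<Sum>j<k. \<alpha> j * L j))"
    using assms(1,2,4,5) L by (intro delta_c_eq_of_tendsto tendsto_entropy_ratio_mixture)
  also have "1 - (\<Sum>j<k. \<alpha> j * L j) = (\<Sum>j<k. \<alpha> j * (1 - L j))"
    using assms(5) by (simp add: right_diff_distrib sum_subtractf)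
  also have "ereal \<dots> = (\<Sum>j<k. ereal (\<alpha> j) * delta_c (\<mu> j))"
    unfolding sum_ereal[symmetric] using L by (intro sum.cong) (simp_all add: delta_c_eq_of_tendsto[OF L])
  finally show ?thesis .
qed

end
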